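(* Let $C$ be a self-dual code over $\mathbb{Z}_4+u\mathbb{Z}_4$ of length $n$. Then (a) $\phi(C)$ is a formally self-dual code over $\mathbb{Z}_4$ of length $2n$; (b) $\mu(C)$ is a self-orthogonal code over $\mathbb{Z}_4$ of length $n$, and $\alpha(C)$ is a self-orthogonal code over $\mathbb{F}_2+u\mathbb{F}_2$; (c) if $\nu(C)$ is self-orthogonal, then $\phi(C)$ is a self-dual code over $\mathbb{Z}_4$ of length $2n$.
   Context: $\mathbb{Z}_4+u\mathbb{Z}_4$ is the commutative ring of characteristic $4$ with $u^2=0$; $\mathbb{F}_2+u\mathbb{F}_2$ is the commutative ring $\{0,1,u,1+u\}$ of characteristic $2$ with $u^2=0$. A linear code of length $n$ over a ring $R$ is an $R$-submodule of $R^n$; its dual is taken with respect to the Euclidean inner product $\sum_i x_iy_i$ in $R$; self-orthogonal means $C\subseteq C^\perp$, self-dual means $C=C^\perp$. A linear code over $\mathbb{Z}_4$ is formally self-dual if it has the same Lee weight enumerator as its dual (Lee weight on $\mathbb{Z}_4$: $0,1,2,1$ for $0,1,2,3$). Maps: $\phi:(\mathbb{Z}_4+u\mathbb{Z}_4)^n\to\mathbb{Z}_4^{2n}$, $\phi(\overline{a}+u\overline{b})=(\overline{b},\overline{a}+\overline{b})$; $\mu(\overline{a}+u\overline{b})=\overline{a}$; $\nu(\overline{a}+u\overline{b})=\overline{b}$ (for $\overline{a},\overline{b}\in\mathbb{Z}_4^n$); $\alpha$ is coordinatewise reduction modulo $2$ from $\mathbb{Z}_4+u\mathbb{Z}_4$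 to $\mathbb{F}_2+u\mathbb{F}_2$. *)

theory Defs
  imports Main "HOL-Library.Numeral_Type"
begin

section \<open>The rings R[u]/(u^2): elements a + u b, written DN a b\<close>

datatype 'a dnum = DN (re: 'a) (du: 'a)

instantiation dnum :: (comm_ring_1) comm_ring_1
begin
definition "0 = DN 0 0"
definition "1 = DN 1 0"
definition "x + y = DN (re x + re y) (du x + du y)"
definition "x - y = DN (re x - re y) (du x - du y)"
definition "- x = DN (- re x) (- du x)"
definition "x * y = DN (re x * re y) (re x * du y + du x * re y)"
instance
  by standard (auto simp: zero_dnum_def one_dnum_def plus_dnum_def minus_dnum_def
      uminus_dnum_def times_dnum_def algebra_simps intro: dnum.expand)
end

type_synonym Z4 = "4"
type_synonym F2 = "2"
type_synonym Z4u = "4 dnum"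
type_synonym F2u = "2 dnum"

definition vadd :: "'a::comm_ring_1 list \<Rightarrow> 'a list \<Rightarrow> 'a list" where
  "vadd x y = map2 (+) x y"

definition smul :: "'a::comm_ring_1 \<Rightarrow> 'a list \<Rightarrow> 'a list" where
  "smul r x = map ((*) r) x"

definition inner :: "'a::comm_ring_1 list \<Rightarrow> 'a list \<Rightarrow> 'a" where
  "inner x y = sum_list (map2 (*) x y)"

definition linear_code :: "nat \<Rightarrow> 'a::comm_ring_1 list set \<Rightarrow> bool" where
  "linear_code n C \<longleftrightarrow> C \<subseteq> {x. length x = n} \<and> replicate n 0 \<in> C \<and>
     (\<forall>x\<in>C. \<forall>y\<in>C. vadd x y \<in> C) \<and> (\<forall>r. \<forall>x\<in>C. smul r x \<in> C)"

definition dual_code :: "nat \<Rightarrow> 'a::comm_ring_1 list set \<Rightarrow> 'a list set" where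
  "dual_code n C = {y. length y = n \<and> (\<forall>x\<in>C. inner x y = 0)}"

definition self_orthogonal :: "nat \<Rightarrow> 'a::comm_ring_1 list set \<Rightarrow> bool" where
  "self_orthogonal n C \<longleftrightarrow> linear_code n C \<and> C \<subseteq> dual_code n C"

definition self_dual :: "nat \<Rightarrow> 'a::comm_ring_1 list set \<Rightarrow> bool" where
  "self_dual n C \<longleftrightarrow> linear_code n C \<and> C = dual_code n C"

definition lee :: "Z4 \<Rightarrow> nat" where
  "lee x = (if x = 0 then 0 else if x = 2 then 2 else 1)"

definition lee_wt :: "Z4 list \<Rightarrow> nat" where
  "lee_wt x = sum_list (map lee x)"

definition lee_count :: "Z4 list set \<Rightarrow> nat \<Rightarrow> nat" where
  "lee_count C w = card {c \<in> C. lee_wt c = w}"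

definition formally_self_dual :: "nat \<Rightarrow> Z4 list set \<Rightarrow> bool" where
  "formally_self_dual n C \<longleftrightarrow> linear_code n C \<and>
     (\<forall>w. lee_count C w = lee_count (dual_code n C) w)"

definition phi :: "Z4u list \<Rightarrow> Z4 list" where
  "phi x = map du x @ map2 (+) (map re x) (map du x)"

definition mu :: "Z4u list \<Rightarrow> Z4 list" where
  "mu x = map re x"

definition nu :: "Z4u list \<Rightarrow> Z4 list" where
  "nu x = map du x"

definition red2 :: "Z4 \<Rightarrow> F2" where
  "red2 x = of_int (Rep_bit0 x)"

definition alpha :: "Z4u list \<Rightarrow> F2u list" where
  "alpha x = map (\<lambda>z. DN (red2 (re z)) (red2 (du z))) x"

end

theory Submission
  imports Defs
begin

text \<open>
  Write \<open>\<langle>-,-\<rangle>\<close> for the inner product and \<open>N\<close> for negation of the first \<open>n\<close> coordinates of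
  a vector of length \<open>2n\<close>. Expanding \<open>\<phi>(a + ub) = (b, a + b)\<close> gives
  \<open>\<langle>\<phi> x, \<phi> y\<rangle> = re\<langle>x,y\<rangle> + du\<langle>x,y\<rangle> + 2\<langle>\<nu> x, \<nu> y\<rangle>\<close> and
  \<open>\<langle>\<phi> x, N (\<phi> y)\<rangle> = re\<langle>x,y\<rangle> + du\<langle>x,y\<rangle>\<close>. A self-dual \<open>C\<close> is closed under multiplication
  by \<open>u\<close>, and \<open>\<langle>u x, z\<rangle> = u re\<langle>x,z\<rangle>\<close>; hence \<open>z \<in> C\<^sup>\<perp> = C\<close> as soon as \<open>re + du\<close> of
  \<open>\<langle>x,z\<rangle>\<close> vanishes for all \<open>x \<in> C\<close>. Since \<open>N \<circ> \<phi>\<close> is onto \<open>\<int>\<^sub>4\<^sup>2\<^sup>n\<close>, this yields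
  \<open>\<phi>(C)\<^sup>\<perp> = N(\<phi>(C))\<close>. As \<open>N\<close> is an involution preserving Lee weight, \<open>\<phi>(C)\<close> is formally
  self-dual; if moreover \<open>\<nu>(C)\<close> is self-orthogonal then \<open>\<phi>(C) \<subseteq> \<phi>(C)\<^sup>\<perp> = N(\<phi>(C))\<close>, which
  forces equality. Finally \<open>\<mu>\<close> and \<open>\<alpha>\<close> act coordinatewise by surjective ring homomorphisms,
  and these preserve self-orthogonality.
\<close>

lemma re_plus [simp]: "re (x + y) = re x + re y"
  and du_plus [simp]: "du (x + y) = du x + du y"
  and re_times [simp]: "re (x * y) = re x * re y"
  and du_times [simp]: "du (x * y) = re x * du y + du x * re y"
  and re_uminus [simp]: "re (- x) = - re x"
  and du_uminus [simp]: "du (- x) = - du x"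
  and re_zero [simp]: "re 0 = 0"
  and du_zero [simp]: "du 0 = 0"
  by (simp_all add: plus_dnum_def times_dnum_def uminus_dnum_def zero_dnum_def)

lemma dnum_eq_0_iff: "x = 0 \<longleftrightarrow> re x = 0 \<and> du x = 0"
  by (cases x) (simp add: zero_dnum_def)

lemma map_dnum_eq: "map_dnum h z = DN (h (re z)) (h (du z))"
  by (cases z) simp

lemma inner_Nil [simp]: "inner [] y = 0" "inner x [] = 0"
  by (simp_all add: inner_def)

lemma inner_Cons [simp]: "inner (x # xs) (y # ys) = x * y + inner xs ys"
  by (simp add: inner_def)

lemma inner_commute: "inner x y = inner y x"
  by (induction x y rule: list_induct2') (simp_all add: mult.commute)

lemma inner_append:
  "length x = length y \<Longrightarrow> inner (x @ x') (y @ y') = inner x y + inner x' y'"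
  by (induction x y rule: list_induct2) (simp_all add: add.assoc)

lemma inner_vadd_left:
  assumes "length x = length y"
  shows "inner (vadd x y) z = inner x z + inner y z"
  using assms
proof (induction x y arbitrary: z rule: list_induct2)
  case (Cons a x b y)
  then show ?case by (cases z) (simp_all add: vadd_def algebra_simps)
qed (simp add: vadd_def)

lemma inner_vadd_right:
  "length x = length y \<Longrightarrow> inner z (vadd x y) = inner z x + inner z y"
  by (metis inner_commute inner_vadd_left)

lemma inner_uminus_left: "inner (map uminus x) y = - inner x y"
  by (induction x y rule: list_induct2') simp_all

lemma inner_uminus_right: "inner x (map uminus y) = - inner x y"
  by (metis inner_commute inner_uminus_left)

lemma inner_smul_left: "inner (smul r x) y = r * inner x y"
  by (induction x y rule: list_induct2') (simp_all add: smul_def algebra_simps)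

lemma inner_du:
  "du (inner x y) = inner (map re x) (map du y) + inner (map du x) (map re y)"
  by (induction x y rule: list_induct2') (simp_all add: algebra_simps)

locale ring_hom =
  fixes h :: "'a::comm_ring_1 \<Rightarrow> 'b::comm_ring_1"
  assumes hom_add: "h (x + y) = h x + h y"
    and hom_mult: "h (x * y) = h x * h y"
    and hom_zero: "h 0 = 0"
begin

lemma inner_map: "inner (map h x) (map h y) = h (inner x y)"
  by (induction x y rule: list_induct2') (simp_all add: hom_add hom_mult hom_zero)

lemma vadd_map: "vadd (map h x) (map h y) = map h (vadd x y)"
  by (simp add: vadd_def list_eq_iff_nth_eq hom_add)

lemma smul_map: "smul (h r) (map h x) = map h (smul r x)"
  by (simp add: smul_def hom_mult)

lemma linear_code_image:
  assumes "surj h" and "linear_code n C"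
  shows "linear_code n (map h ` C)"
  unfolding linear_code_def
proof (intro conjI ballI allI)
  show "map h ` C \<subseteq> {x. length x = n}" and "replicate n 0 \<in> map h ` C"
    using assms(2) hom_zero by (force simp: linear_code_def map_replicate_const)+
  show "vadd x y \<in> map h ` C" if "x \<in> map h ` C" "y \<in> map h ` C" for x y
    using that assms(2) by (auto simp: vadd_map linear_code_def)
  show "smul r x \<in> map h ` C" if "x \<in> map h ` C" for r x
  proof -
    obtain s where "r = h s" using \<open>surj h\<close> by (metis surjD)
    then show ?thesis using that assms(2) by (auto simp: smul_map linear_code_def)
  qed
qed

lemma self_orthogonal_image:
  assumes "surj h" and "self_orthogonal n C"
  shows "self_orthogonal n (map h ` C)"
  using assms linear_code_image[OF \<open>surj h\<close>]
  by (auto simp: self_orthogonal_def dual_code_def inner_map hom_zero subset_iff)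

end

interpretation re: ring_hom re
  by standard simp_all

lemma ring_hom_map_dnum:
  assumes "ring_hom h"
  shows "ring_hom (map_dnum h)"
proof -
  interpret ring_hom h by fact
  show ?thesis
    by standard (simp_all add: map_dnum_eq plus_dnum_def times_dnum_def zero_dnum_def
        hom_add hom_mult hom_zero)
qed

lemma surj_map_dnum:
  assumes "surj h"
  shows "surj (map_dnum h)"
proof (rule surjI)
  fix z
  show "map_dnum h (map_dnum (inv h) z) = z"
    using assms by (cases z) (simp add: surj_f_inv_f)
qed

lemma red2_of_int: "red2 (of_int k) = of_int k"
proof -
  have "Rep_bit0 (of_int k :: Z4) = k mod 4"
    using bit0.Rep_Abs_mod[where 'a = "2", of k] by (simp add: bit0.of_int_eq)
  moreover have "(of_int (k mod 4) :: F2) = of_int k"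
    by (simp add: bit0.of_int_eq mod_mod_cancel)
  ultimately show ?thesis by (simp add: red2_def)
qed

interpretation red2: ring_hom red2
proof
  fix x y :: Z4
  obtain a b where "x = of_int a" "y = of_int b" by (meson bit0.cases)
  then show "red2 (x + y) = red2 x + red2 y" and "red2 (x * y) = red2 x * red2 y"
    by (simp_all flip: of_int_add of_int_mult add: red2_of_int)
next
  show "red2 0 = 0" using red2_of_int[of 0] by simp
qed

lemma surj_red2: "surj red2"
  unfolding surj_def by (metis bit0.cases red2_of_int)

lemma alpha_eq_map: "alpha x = map (map_dnum red2) x"
  by (simp add: alpha_def map_dnum_eq)

lemma lee_uminus: "lee (- x) = lee x"
proof -
  have "(- 2 :: Z4) = 2" by simp
  then have "- x = 2 \<longleftrightarrow> x = 2" by (metis minus_minus)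
  then show ?thesis by (simp add: lee_def)
qed

definition negate_prefix :: "nat \<Rightarrow> 'a::group_add list \<Rightarrow> 'a list" where
  "negate_prefix k v = map uminus (take k v) @ drop k v"

lemma length_negate_prefix [simp]: "length (negate_prefix k v) = length v"
  by (simp add: negate_prefix_def)

lemma negate_prefix_negate_prefix [simp]: "negate_prefix k (negate_prefix k v) = v"
  by (simp add: negate_prefix_def min_def)

lemma inj_negate_prefix: "inj (negate_prefix k)"
  by (metis injI negate_prefix_negate_prefix)

lemma lee_wt_negate_prefix: "lee_wt (negate_prefix k v) = lee_wt v"
proof -
  have "lee_wt (negate_prefix k v) = lee_wt (take k v) + lee_wt (drop k v)"
    by (simp add: negate_prefix_def lee_wt_def comp_def lee_uminus)
  also have "\<dots> = lee_wt v"
    by (metis append_take_drop_id lee_wt_def map_append sum_list_append)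
  finally show ?thesis .
qed

lemma lee_count_image:
  assumes "inj g" and "\<And>v. lee_wt (g v) = lee_wt v"
  shows "lee_count (g ` A) w = lee_count A w"
proof -
  have "{c \<in> g ` A. lee_wt c = w} = g ` {c \<in> A. lee_wt c = w}"
    using assms(2) by auto
  then show ?thesis
    unfolding lee_count_def by (simp add: card_image inj_on_subset[OF assms(1)])
qed

lemma image_eq_if_subset_involution:
  assumes "\<And>x. g (g x) = x" and "A \<subseteq> g ` A"
  shows "g ` A = A"
proof -
  have "g ` A \<subseteq> g ` g ` A" using assms(2) by blast
  also have "g ` g ` A = A" using assms(1) by (simp add: image_image)
  finally show ?thesis using assms(2) by blast
qed

lemma length_phi [simp]: "length (phi x) = 2 * length x"
  by (simp add: phi_def)

lemma phi_eq_append: "phi x = map du x @ vadd (map re x) (map du x)"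
  by (simp add: phi_def vadd_def)

lemma inner_vadd_re_du:
  assumes "length x = length y"
  shows "inner (vadd (map re x) (map du x)) (vadd (map re y) (map du y)) =
    re (inner x y) + du (inner x y) + inner (map du x) (map du y)"
  using assms by (simp add: inner_vadd_left inner_vadd_right inner_du re.inner_map add.assoc)

lemma inner_phi_phi:
  assumes "length x = length y"
  shows "inner (phi x) (phi y) = re (inner x y) + du (inner x y) + 2 * inner (map du x) (map du y)"
  using assms by (simp add: phi_eq_append inner_append inner_vadd_re_du algebra_simps)

lemma negate_prefix_phi:
  "negate_prefix (length x) (phi x) = map uminus (map du x) @ vadd (map re x) (map du x)"
  by (simp add: negate_prefix_def phi_eq_append)

lemma inner_phi_negate_prefix_phi:
  assumes "length x = length y"
  shows "inner (phi x) (negate_prefix (length y) (phi y)) = re (inner x y) + du (inner x y)"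
  using assms unfolding negate_prefix_phi
  by (simp add: phi_eq_append inner_append inner_vadd_re_du inner_uminus_right del: map_map)

lemma negate_prefix_phi_surj:
  assumes "length v = 2 * n"
  obtains z where "length z = n" and "negate_prefix n (phi z) = v"
proof
  define y1 y2 where "y1 = take n v" and "y2 = drop n v"
  have len: "length y1 = n" "length y2 = n" using assms by (simp_all add: y1_def y2_def)
  define z where "z = map2 DN (vadd y1 y2) (map uminus y1)"
  show "length z = n" using len by (simp add: z_def vadd_def)
  have "map re z = vadd y1 y2" and "map du z = map uminus y1"
    using len by (simp_all add: z_def vadd_def list_eq_iff_nth_eq)
  moreover have "vadd (vadd y1 y2) (map uminus y1) = y2"
    using len by (simp add: vadd_def list_eq_iff_nth_eq)
  ultimately have "negate_prefix n (phi z) = y1 @ y2"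
    using negate_prefix_phi[of z] \<open>length z = n\<close> by simp
  then show "negate_prefix n (phi z) = v" by (simp add: y1_def y2_def)
qed

lemma linear_code_phi_image:
  assumes "linear_code n C"
  shows "linear_code (2 * n) (phi ` C)"
proof -
  have len: "\<And>x. x \<in> C \<Longrightarrow> length x = n" using assms by (auto simp: linear_code_def)
  have zero: "phi (replicate n 0) = replicate (2 * n) 0"
    by (simp add: phi_def list_eq_iff_nth_eq nth_append)
  have add: "vadd (phi x) (phi y) = phi (vadd x y)" if "length x = length y" for x y
    using that by (simp add: list_eq_iff_nth_eq vadd_def phi_def nth_append algebra_simps)
  have scale: "smul r (phi x) = phi (smul (DN r 0) x)" for r x
    by (simp add: list_eq_iff_nth_eq smul_def phi_def nth_append algebra_simps times_dnum_def)
  show ?thesis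
    unfolding linear_code_def
  proof (intro conjI ballI allI)
    show "phi ` C \<subseteq> {x. length x = 2 * n}" using len by auto
    show "replicate (2 * n) 0 \<in> phi ` C"
      using assms zero by (metis image_eqI linear_code_def)
    show "vadd v w \<in> phi ` C" if vw: "v \<in> phi ` C" "w \<in> phi ` C" for v w
    proof -
      obtain x y where "x \<in> C" "y \<in> C" "v = phi x" "w = phi y" using vw by blast
      then show ?thesis using assms add len by (metis image_eqI linear_code_def)
    qed
    show "smul r v \<in> phi ` C" if v: "v \<in> phi ` C" for r v
    proof -
      obtain x where "x \<in> C" "v = phi x" using v by blast
      then show ?thesis using assms scale by (metis image_eqI linear_code_def)
    qed
  qed
qed

lemma self_dual_linear_code: "self_dual n C \<Longrightarrow> linear_code n C"
  unfolding self_dual_def by blast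

lemma self_dual_length: "self_dual n C \<Longrightarrow> x \<in> C \<Longrightarrow> length x = n"
  using self_dual_linear_code unfolding linear_code_def by blast

lemma self_dual_inner_eq_0: "self_dual n C \<Longrightarrow> x \<in> C \<Longrightarrow> y \<in> C \<Longrightarrow> inner x y = 0"
  unfolding self_dual_def by (metis (mono_tags, lifting) dual_code_def mem_Collect_eq)

lemma dual_code_phi_image:
  assumes "self_dual n C"
  shows "dual_code (2 * n) (phi ` C) = negate_prefix n ` phi ` C"
proof
  note len = self_dual_length[OF assms] and orth = self_dual_inner_eq_0[OF assms]
  show "negate_prefix n ` phi ` C \<subseteq> dual_code (2 * n) (phi ` C)"
  proof clarify
    fix y assume y: "y \<in> C"
    have "inner (phi x) (negate_prefix n (phi y)) = 0" if "x \<in> C" for x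
      using inner_phi_negate_prefix_phi[of x y] len[OF y] len[OF that] orth[OF that y] by simp
    then show "negate_prefix n (phi y) \<in> dual_code (2 * n) (phi ` C)"
      using len[OF y] by (auto simp: dual_code_def)
  qed
  show "dual_code (2 * n) (phi ` C) \<subseteq> negate_prefix n ` phi ` C"
  proof
    fix v assume v: "v \<in> dual_code (2 * n) (phi ` C)"
    then obtain z where z: "length z = n" "negate_prefix n (phi z) = v"
      by (auto simp: dual_code_def elim: negate_prefix_phi_surj)
    have trace: "re (inner x z) + du (inner x z) = 0" if "x \<in> C" for x
      using v z len[OF that] that inner_phi_negate_prefix_phi[of x z] by (auto simp: dual_code_def)
    have "inner x z = 0" if "x \<in> C" for x
    proof -
      have "smul (DN 0 1) x \<in> C"
        using self_dual_linear_code[OF assms] that by (simp add: linear_code_def)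
      then have "re (inner x z) = 0"
        using trace[of "smul (DN 0 1) x"] by (simp add: inner_smul_left times_dnum_def)
      then show ?thesis using trace[OF that] by (simp add: dnum_eq_0_iff)
    qed
    with z(1) have "z \<in> dual_code n C" by (simp add: dual_code_def)
    then have "z \<in> C" using assms unfolding self_dual_def by blast
    with z(2) show "v \<in> negate_prefix n ` phi ` C" by blast
  qed
qed

lemma formally_self_dual_phi_image:
  assumes "self_dual n C"
  shows "formally_self_dual (2 * n) (phi ` C)"
  using linear_code_phi_image[OF self_dual_linear_code[OF assms]]
  by (simp add: formally_self_dual_def dual_code_phi_image[OF assms] lee_count_image
      inj_negate_prefix lee_wt_negate_prefix)

lemma self_dual_phi_image:
  assumes "self_dual n C" and "self_orthogonal n (nu ` C)"
  shows "self_dual (2 * n) (phi ` C)"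
proof -
  note len = self_dual_length[OF assms(1)] and orth = self_dual_inner_eq_0[OF assms(1)]
  have orth_nu: "inner (map du x) (map du y) = 0" if "x \<in> C" "y \<in> C" for x y
    using assms(2) that by (auto simp: self_orthogonal_def dual_code_def nu_def)
  have "inner (phi x) (phi y) = 0" if "x \<in> C" "y \<in> C" for x y
    using inner_phi_phi[of x y] len[OF that(1)] len[OF that(2)] orth[OF that] orth_nu[OF that]
    by simp
  then have "phi ` C \<subseteq> dual_code (2 * n) (phi ` C)"
    using len by (auto simp: dual_code_def)
  then have "negate_prefix n ` phi ` C = phi ` C"
    by (intro image_eq_if_subset_involution) (simp_all add: dual_code_phi_image assms(1))
  then show ?thesis
    using linear_code_phi_image[OF self_dual_linear_code[OF assms(1)]]
    by (simp add: self_dual_def dual_code_phi_image[OF assms(1)])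
qed

lemma self_orthogonal_mu_image: "self_orthogonal n C \<Longrightarrow> self_orthogonal n (mu ` C)"
  unfolding mu_def
  by (rule re.self_orthogonal_image) (rule surjI[of _ "\<lambda>a. DN a 0"], simp_all)

lemma self_orthogonal_alpha_image: "self_orthogonal n C \<Longrightarrow> self_orthogonal n (alpha ` C)"
  unfolding alpha_eq_map[abs_def]
  by (rule ring_hom.self_orthogonal_image[OF ring_hom_map_dnum surj_map_dnum])
    (simp_all add: red2.ring_hom_axioms surj_red2)

theorem theorem4p4:
  fixes C :: "Z4u list set" and n :: nat
  assumes "self_dual n C"
  shows "formally_self_dual (2 * n) (phi ` C) \<and>
         self_orthogonal n (mu ` C) \<and> self_orthogonal n (alpha ` C) \<and>
         (self_orthogonal n (nu ` C) \<longrightarrow> self_dual (2 * n) (phi ` C))"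
proof -
  have "self_orthogonal n C"
    using assms unfolding self_dual_def self_orthogonal_def by blast
  then show ?thesis
    using assms formally_self_dual_phi_image self_dual_phi_image
      self_orthogonal_mu_image self_orthogonal_alpha_image
    by blast
qed

end
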